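(* Let $m$ be a positive integer, let $\mathcal{N}_r$ be the gadget of size $m$, and let $\pi$ be an $\mathcal{H}^{(\ast)}$-partition of $\mathcal{N}_r$. Then either for each $i\in\{0,1,\dots,m\}$ there exists $L_i\in\pi$ such that the Hamiltonian path of $\mathcal{N}_r[L_i]$ is a subsequence of $\swarrow_r^{i}=(r_{i,0},r_{i,1},\dots,r_{i,m})$, or for each $i\in\{0,1,\dots,m\}$ there exists $R_i\in\pi$ such that the Hamiltonian path of $\mathcal{N}_r[R_i]$ is a subsequence of $\searrow_r^{i}=(r_{0,i},r_{1,i},\dots,r_{m,i})$.
   Context: The gadget $\mathcal{N}_r=\langle\mathcal{V}_r,\mathcal{E}_r\rangle$ of size $m$ has vertex set $\mathcal{V}_r=\{r_{i,j}:0\le i,j\le m\}$ and arc set $\mathcal{E}_r=\swarrow_r\cup\searrow_r$, where $\swarrow_r=\{\langle r_{i,j},r_{i,j+1}\rangle:0\le i\le m,\ 0\le j<m\}$ and $\searrow_r=\{\langle r_{i,j},r_{i+1,j}\rangle:0\le i<m,\ 0\le j\le m\}$; it is a DAG. For a digraph $G$ and a subset $V_1$ of its vertices, $G[V_1]$ is the induced subgraph. A partition $\pi$ of the vertex set of a DAG $G$ is an $\mathcal{H}^{(\ast)}$-partition if every induced subgraph $G[P]$, $P\in\pi$, has a directed Hamiltonian path (unique in a DAG) and the quotient digraph $G/\pi$ (vertex set $\pi$, arc $\langle P,Q\rangle$ for $P\ne Q$ whenever some arc of $G$ goes from $P$ to $Q$) is acyclic. *)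

theory Defs
  imports Main "HOL-Library.Disjoint_Sets" "HOL-Library.Sublist"
begin

(* Gadget N_r of size m: vertex r_{i,j} is represented by the pair (i,j). *)
definition gadget_V :: "nat \<Rightarrow> (nat \<times> nat) set" where
  "gadget_V m = {(i,j). i \<le> m \<and> j \<le> m}"

definition gadget_sw :: "nat \<Rightarrow> ((nat \<times> nat) \<times> (nat \<times> nat)) set" where
  "gadget_sw m = {((i,j),(i,j+1)) | i j. i \<le> m \<and> j < m}"

definition gadget_se :: "nat \<Rightarrow> ((nat \<times> nat) \<times> (nat \<times> nat)) set" where
  "gadget_se m = {((i,j),(i+1,j)) | i j. i < m \<and> j \<le> m}"

definition gadget_E :: "nat \<Rightarrow> ((nat \<times> nat) \<times> (nat \<times> nat)) set" where
  "gadget_E m = gadget_sw m \<union> gadget_se m"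

definition ham_path :: "('a \<times> 'a) set \<Rightarrow> 'a set \<Rightarrow> 'a list \<Rightarrow> bool" where
  "ham_path E P ps \<longleftrightarrow> distinct ps \<and> set ps = P \<and>
     successively (\<lambda>x y. (x, y) \<in> E \<inter> (P \<times> P)) ps"

definition quotient_arcs :: "('a \<times> 'a) set \<Rightarrow> 'a set set \<Rightarrow> ('a set \<times> 'a set) set" where
  "quotient_arcs E \<pi> = {(P,Q). P \<in> \<pi> \<and> Q \<in> \<pi> \<and> P \<noteq> Q \<and> (\<exists>u\<in>P. \<exists>v\<in>Q. (u,v) \<in> E)}"

definition H_star_partition :: "'a set \<Rightarrow> ('a \<times> 'a) set \<Rightarrow> 'a set set \<Rightarrow> bool" where
  "H_star_partition V E \<pi> \<longleftrightarrow> partition_on V \<pi> \<and>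
     (\<forall>P\<in>\<pi>. \<exists>ps. ham_path E P ps) \<and> acyclic (quotient_arcs E \<pi>)"

end

theory Submission
  imports Defs "HOL-Library.Product_Order"
begin

text \<open>
  A part of an \<open>\<H>\<^sup>(\<^sup>*\<^sup>)\<close>-partition is convex: a directed path that leaves and re-enters it
  would give a cycle in the quotient. In the grid every path runs monotonically in both
  coordinates, so a Hamiltonian path makes a part a chain for the componentwise order,
  while convexity puts the corners of the rectangle spanned by two of its vertices into it.
  Two incomparable corners cannot both lie on a chain, hence every part lies in a single row
  or a single column, and the part containing \<open>r\<^sub>i\<^sub>,\<^sub>j\<close> does so in row \<open>i\<close> or column \<open>j\<close>.
  If neither all rows nor all columns carried such a part, the part of \<open>r\<^sub>i\<^sub>,\<^sub>j\<close> for a bad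
  row \<open>i\<close> and a bad column \<open>j\<close> would be impossible.
\<close>

lemma sorted_wrt_total_on_set:
  "sorted_wrt R xs \<Longrightarrow> x \<in> set xs \<Longrightarrow> y \<in> set xs \<Longrightarrow> x = y \<or> R x y \<or> R y x"
  by (induction xs) auto

lemma subseq_map_upt_if_sorted_key:
  assumes sorted: "sorted_wrt (\<lambda>x y. g x < g y) xs"
    and key: "\<forall>x\<in>set xs. g x \<le> m \<and> f (g x) = x"
  shows "subseq xs (map f [0..<m+1])"
proof -
  have sorted_keys: "sorted_wrt (<) (map g xs)"
    using sorted by (simp add: sorted_wrt_map)
  have "map g xs = filter (\<lambda>k. k \<in> g ` set xs) [0..<m+1]"
  proof (rule sorted_distinct_set_unique)
    show "sorted (filter (\<lambda>k. k \<in> g ` set xs) [0..<m+1])"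
      by (rule sorted_wrt_filter) (simp only: sorted_upt)
  qed (use sorted_keys key in \<open>auto simp: strict_sorted_iff simp del: upt_Suc\<close>)
  then have "subseq (map f (map g xs)) (map f [0..<m+1])"
    by (metis subseq_filter_left subseq_map)
  moreover have "map f (map g xs) = xs"
    using key by (simp add: map_idI)
  ultimately show ?thesis by simp
qed

lemma ham_path_sorted_wrt:
  assumes "ham_path E P ps" "transp R" "\<And>x y. (x, y) \<in> E \<Longrightarrow> R x y"
  shows "sorted_wrt R ps"
proof -
  have "successively (\<lambda>x y. (x, y) \<in> E \<inter> P \<times> P) ps"
    using assms(1) by (simp add: ham_path_def)
  then have "successively R ps"
    by (rule successively_mono) (use assms(3) in blast)
  then show ?thesis
    using assms(2) by (simp add: successively_conv_sorted_wrt)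
qed

lemma quotient_arcs_rtrancl_lift:
  assumes part: "partition_on V \<pi>" and EV: "E \<subseteq> V \<times> V"
    and path: "(a, b) \<in> E\<^sup>*" and A: "A \<in> \<pi>" "a \<in> A" and B: "B \<in> \<pi>" "b \<in> B"
  shows "(A, B) \<in> (quotient_arcs E \<pi>)\<^sup>*"
  using path B
proof (induction arbitrary: B rule: rtrancl_induct)
  case base
  then have "A = B"
    using A partition_onD2[OF part] by (auto simp: disjoint_def)
  then show ?case by simp
next
  case (step b c)
  obtain B' where B': "B' \<in> \<pi>" "b \<in> B'"
    using step.hyps(2) EV partition_onD1[OF part] by blast
  have "(A, B') \<in> (quotient_arcs E \<pi>)\<^sup>*"
    using step.IH B' .
  moreover have "(B', B) \<in> (quotient_arcs E \<pi>)\<^sup>="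
    using B' step.hyps(2) step.prems unfolding quotient_arcs_def by auto
  ultimately show ?case by auto
qed

lemma H_star_partition_convex:
  assumes H: "H_star_partition V E \<pi>" and EV: "E \<subseteq> V \<times> V"
    and P: "P \<in> \<pi>" "u \<in> P" "w \<in> P"
    and uz: "(u, z) \<in> E\<^sup>*" and zw: "(z, w) \<in> E\<^sup>*"
  shows "z \<in> P"
proof (rule ccontr)
  assume "z \<notin> P"
  have part: "partition_on V \<pi>" and acyc: "acyclic (quotient_arcs E \<pi>)"
    using H by (auto simp: H_star_partition_def)
  have "z \<in> V"
    using uz \<open>z \<notin> P\<close> P(2) EV by (cases rule: rtranclE) auto
  then obtain Q where Q: "Q \<in> \<pi>" "z \<in> Q"
    using partition_onD1[OF part] by blast
  with \<open>z \<notin> P\<close> have "P \<noteq> Q" by auto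
  moreover have "(P, Q) \<in> (quotient_arcs E \<pi>)\<^sup>*"
    using quotient_arcs_rtrancl_lift[OF part EV uz P(1,2) Q] .
  ultimately have "(P, Q) \<in> (quotient_arcs E \<pi>)\<^sup>+"
    by (meson rtranclD)
  moreover have "(Q, P) \<in> (quotient_arcs E \<pi>)\<^sup>*"
    using quotient_arcs_rtrancl_lift[OF part EV zw Q P(1,3)] .
  ultimately have "(P, P) \<in> (quotient_arcs E \<pi>)\<^sup>+" by simp
  with acyc show False by (simp add: acyclic_def)
qed

lemma gadget_V_eq_atMost: "gadget_V m = {..(m, m)}"
  by (auto simp: gadget_V_def less_eq_prod_def)

lemma gadget_E_subset: "gadget_E m \<subseteq> gadget_V m \<times> gadget_V m"
  by (auto simp: gadget_E_def gadget_sw_def gadget_se_def gadget_V_def)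

lemma gadget_arc_less: "(a, b) \<in> gadget_E m \<Longrightarrow> a < b"
  by (auto simp: gadget_E_def gadget_sw_def gadget_se_def less_prod_def less_eq_prod_def)

lemma gadget_row_rtrancl:
  assumes "j \<le> j'" "j' \<le> m" "i \<le> m"
  shows "((i, j), (i, j')) \<in> (gadget_E m)\<^sup>*"
  using assms
proof (induction j' rule: dec_induct)
  case (step n)
  then have "((i, n), (i, Suc n)) \<in> gadget_E m"
    by (auto simp: gadget_E_def gadget_sw_def)
  with step show ?case by (simp add: rtrancl_into_rtrancl)
qed simp

lemma gadget_column_rtrancl:
  assumes "i \<le> i'" "i' \<le> m" "j \<le> m"
  shows "((i, j), (i', j)) \<in> (gadget_E m)\<^sup>*"
  using assms
proof (induction i' rule: dec_induct)
  case (step n)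
  then have "((n, j), (Suc n, j)) \<in> gadget_E m"
    by (auto simp: gadget_E_def gadget_se_def)
  with step show ?case by (simp add: rtrancl_into_rtrancl)
qed simp

lemma gadget_rtrancl_if_le:
  assumes "a \<le> b" "b \<in> gadget_V m"
  shows "(a, b) \<in> (gadget_E m)\<^sup>*"
proof -
  obtain i j i' j' where ab: "a = (i, j)" "b = (i', j')" "i \<le> i'" "j \<le> j'" "i' \<le> m" "j' \<le> m"
    using assms by (cases a; cases b) (auto simp: gadget_V_def)
  then have "((i, j), (i, j')) \<in> (gadget_E m)\<^sup>*" "((i, j'), (i', j')) \<in> (gadget_E m)\<^sup>*"
    by (auto intro: gadget_row_rtrancl gadget_column_rtrancl)
  with ab show ?thesis by simp
qed

lemma gadget_ham_path_sorted: "ham_path (gadget_E m) P ps \<Longrightarrow> sorted_wrt (<) ps"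
  by (rule ham_path_sorted_wrt) (auto intro: gadget_arc_less transpI less_trans)

lemma gadget_part_share_coordinate:
  assumes H: "H_star_partition (gadget_V m) (gadget_E m) \<pi>"
    and P: "P \<in> \<pi>" "u \<in> P" "w \<in> P"
  shows "fst u = fst w \<or> snd u = snd w"
proof -
  obtain ps where ps: "ham_path (gadget_E m) P ps"
    using H P(1) by (auto simp: H_star_partition_def)
  have comparable: "x \<le> y \<or> y \<le> x" if "x \<in> P" "y \<in> P" for x y
  proof -
    have "x = y \<or> x < y \<or> y < x"
      using sorted_wrt_total_on_set[OF gadget_ham_path_sorted[OF ps]] ps that
      by (simp add: ham_path_def)
    then show ?thesis by (auto dest: less_imp_le)
  qed
  have "P \<subseteq> gadget_V m"
    using H P(1) by (auto simp: H_star_partition_def partition_on_def)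
  have between: "z \<in> P" if "x \<in> P" "y \<in> P" "x \<le> z" "z \<le> y" for x y z
  proof (rule H_star_partition_convex[OF H gadget_E_subset P(1) that(1,2)])
    have "y \<in> gadget_V m" using \<open>P \<subseteq> gadget_V m\<close> that(2) by blast
    then have "z \<in> gadget_V m"
      using that(4) by (auto simp: gadget_V_eq_atMost intro: order_trans)
    with \<open>y \<in> gadget_V m\<close> show "(x, z) \<in> (gadget_E m)\<^sup>*" "(z, y) \<in> (gadget_E m)\<^sup>*"
      using that(3,4) by (auto intro: gadget_rtrancl_if_le)
  qed
  have corners: "fst x = fst y \<or> snd x = snd y" if "x \<in> P" "y \<in> P" "x \<le> y" for x y
  proof -
    have "(fst x, snd y) \<in> P" "(fst y, snd x) \<in> P"
      by (rule between[OF that(1,2)]; use that(3) in \<open>simp add: less_eq_prod_def\<close>)+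
    from comparable[OF this] show ?thesis
      using that(3) by (auto simp: less_eq_prod_def)
  qed
  show ?thesis
    using comparable[OF P(2,3)] corners[OF P(2,3)] corners[OF P(3,2)] by auto
qed

lemma gadget_part_in_row_or_column:
  assumes H: "H_star_partition (gadget_V m) (gadget_E m) \<pi>"
    and P: "P \<in> \<pi>" "(i, j) \<in> P"
  shows "(\<forall>u\<in>P. fst u = i) \<or> (\<forall>u\<in>P. snd u = j)"
proof (rule ccontr)
  assume "\<not> ?thesis"
  then obtain u w where u: "u \<in> P" "fst u \<noteq> i" and w: "w \<in> P" "snd w \<noteq> j"
    by blast
  have "snd u = j" "fst w = i"
    using gadget_part_share_coordinate[OF H P(1,2)] u w by force+
  with gadget_part_share_coordinate[OF H P(1) u(1) w(1)] u w show False
    by auto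
qed

lemma gadget_ham_path_in_row:
  assumes ps: "ham_path (gadget_E m) P ps" and PV: "P \<subseteq> gadget_V m"
    and row: "\<forall>u\<in>P. fst u = i"
  shows "subseq ps (map (\<lambda>j. (i, j)) [0..<m+1])"
proof (rule subseq_map_upt_if_sorted_key)
  have P: "set ps = P" using ps by (simp add: ham_path_def)
  show "sorted_wrt (\<lambda>x y. snd x < snd y) ps"
    using gadget_ham_path_sorted[OF ps]
    by (rule sorted_wrt_mono_rel[rotated]) (use row P in \<open>auto simp: less_prod_def less_eq_prod_def\<close>)
  show "\<forall>x\<in>set ps. snd x \<le> m \<and> (i, snd x) = x"
    using row PV P by (auto simp: gadget_V_def)
qed

lemma gadget_ham_path_in_column:
  assumes ps: "ham_path (gadget_E m) P ps" and PV: "P \<subseteq> gadget_V m"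
    and column: "\<forall>u\<in>P. snd u = j"
  shows "subseq ps (map (\<lambda>i. (i, j)) [0..<m+1])"
proof (rule subseq_map_upt_if_sorted_key)
  have P: "set ps = P" using ps by (simp add: ham_path_def)
  show "sorted_wrt (\<lambda>x y. fst x < fst y) ps"
    using gadget_ham_path_sorted[OF ps]
    by (rule sorted_wrt_mono_rel[rotated]) (use column P in \<open>auto simp: less_prod_def less_eq_prod_def\<close>)
  show "\<forall>x\<in>set ps. fst x \<le> m \<and> (fst x, j) = x"
    using column PV P by (auto simp: gadget_V_def)
qed

theorem lemma5p3:
  fixes m :: nat and \<pi> :: "(nat \<times> nat) set set"
  assumes "m > 0"
    and "H_star_partition (gadget_V m) (gadget_E m) \<pi>"
  shows "(\<forall>i\<le>m. \<exists>L\<in>\<pi>. \<exists>ps. ham_path (gadget_E m) L ps \<and>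
              subseq ps (map (\<lambda>j. (i, j)) [0..<m+1]))
       \<or> (\<forall>i\<le>m. \<exists>R\<in>\<pi>. \<exists>ps. ham_path (gadget_E m) R ps \<and>
              subseq ps (map (\<lambda>k. (k, i)) [0..<m+1]))"
proof (rule ccontr)
  note H = assms(2)
  have part: "partition_on (gadget_V m) \<pi>" and ham: "\<forall>P\<in>\<pi>. \<exists>ps. ham_path (gadget_E m) P ps"
    using H by (auto simp: H_star_partition_def)
  assume "\<not> ?thesis"
  then obtain i j where "i \<le> m" "j \<le> m"
    and no_row: "\<not> (\<exists>L\<in>\<pi>. \<exists>ps. ham_path (gadget_E m) L ps \<and> subseq ps (map (\<lambda>j. (i, j)) [0..<m+1]))"
    and no_column: "\<not> (\<exists>R\<in>\<pi>. \<exists>ps. ham_path (gadget_E m) R ps \<and> subseq ps (map (\<lambda>k. (k, j)) [0..<m+1]))"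
    by blast
  then obtain P where P: "P \<in> \<pi>" "(i, j) \<in> P"
    using partition_onD1[OF part] by (force simp: gadget_V_def)
  moreover obtain ps where ps: "ham_path (gadget_E m) P ps"
    using ham P(1) by blast
  moreover have "P \<subseteq> gadget_V m"
    using part P(1) by (auto simp: partition_on_def)
  ultimately show False
    using gadget_part_in_row_or_column[OF H P] no_row no_column
      gadget_ham_path_in_row gadget_ham_path_in_column by blast
qed

end
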